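(* Let $I=[x_1,x_N]$ with partition $x_1<\dots<x_N$ and affine maps $u_i(x)=a_ix+b_i$ with $u_i(x_1)=x_i$, $u_i(x_N)=x_{i+1}$ ($i\in\mathbb{N}_{N-1}$). Let $f,g\in C(I)$ with $f\ge g$ on $I$ and let $\{q_n\}$ be a sequence in $(0,1]$ with $\lim q_n=1$. Set $\phi(f-g,i)=\min_{x\in I}(f-g)(u_i(x))$, $\Phi_n(f)=\max_{x\in I}M_{n,q_n}f(x)$, $\phi(g)=\min_{x\in I}g(x)$. Suppose the continuous scaling functions satisfy (1) $\|\alpha\|_\infty<1$ and (2) for all $n\in\mathbb{N}$, $i\in\mathbb{N}_{N-1}$, $x\in I$: \[ 0\le\alpha_i(x)\le\min\left\{\frac{\phi(f-g,i)}{\Phi_n(f)-\phi(g)},1\right\}. \] Then the quantum MKZ-fractal functions satisfy $f^{(q_n,\alpha)}_n\ge g$ on $I$ for every $n\in\mathbb{N}$, and $f^{(q_n,\alpha)}_n\to f$ uniformly on $I$.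
   Context: For $q\in(0,1]$: $[k]_q=\frac{1-q^k}{1-q}$ ($q\ne1$), $[k]_1=k$, $q$-factorials, $\binom{n}{k}_q=\frac{[n]_q!}{[k]_q![n-k]_q!}$. Quantum MKZ operator: $M_{n,q}h(x)=P_{n,q}(x)\sum_{k\ge0}\binom{n+k}{k}_q\left(\frac{x-x_1}{x_N-x_1}\right)^k h\!\left(x_1+(x_N-x_1)\frac{[k]_q}{[k+n]_q}\right)$ for $x_1\le x<x_N$, $M_{n,q}h(x_N)=h(x_N)$, $P_{n,q}(x)=\prod_{j=0}^n(x_N-x_1-q^j(x-x_1))/(x_N-x_1)^{n+1}$. $\|\alpha\|_\infty=\max_i\|\alpha_i\|_\infty$. The quantum MKZ-fractal function $h^{(q,\alpha)}_n$ of $h\in C(I)$ is the unique $G\in C(I)$ with $G(u_i(x))=h(u_i(x))+\alpha_i(x)(G(x)-M_{n,q}h(x))$ for all $x\in I$, $i\in\mathbb{N}_{N-1}$. *)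

theory Defs
  imports "HOL-Analysis.Analysis"
begin

definition qint :: "real \<Rightarrow> nat \<Rightarrow> real" where
  "qint q k = (if q = 1 then real k else (1 - q ^ k) / (1 - q))"

definition qfact :: "real \<Rightarrow> nat \<Rightarrow> real" where
  "qfact q n = (\<Prod>k\<in>{1..n}. qint q k)"

definition qbinom :: "real \<Rightarrow> nat \<Rightarrow> nat \<Rightarrow> real" where
  "qbinom q n k = qfact q n / (qfact q k * qfact q (n - k))"

definition mkzP :: "real \<Rightarrow> real \<Rightarrow> nat \<Rightarrow> real \<Rightarrow> real \<Rightarrow> real" where
  "mkzP x1 xN n q x =
     (\<Prod>j\<in>{0..n}. (xN - x1 - q ^ j * (x - x1))) / (xN - x1) ^ (n + 1)"

definition mkz :: "real \<Rightarrow> real \<Rightarrow> nat \<Rightarrow> real \<Rightarrow> (real \<Rightarrow> real) \<Rightarrow> real \<Rightarrow> real" where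
  "mkz x1 xN n q h x =
     (if x = xN then h xN
      else mkzP x1 xN n q x *
        (\<Sum>k. qbinom q (n + k) k * ((x - x1) / (xN - x1)) ^ k *
               h (x1 + (xN - x1) * (qint q k / qint q (k + n)))))"

definition mkz_fractal ::
  "real \<Rightarrow> real \<Rightarrow> nat \<Rightarrow> (nat \<Rightarrow> real \<Rightarrow> real) \<Rightarrow> (nat \<Rightarrow> real \<Rightarrow> real)
    \<Rightarrow> nat \<Rightarrow> real \<Rightarrow> (real \<Rightarrow> real) \<Rightarrow> real \<Rightarrow> real" where
  "mkz_fractal x1 xN N u \<alpha> n q h =
     (THE G. continuous_on {x1..xN} G \<and> (\<forall>y. y \<notin> {x1..xN} \<longrightarrow> G y = 0) \<and>
        (\<forall>i\<in>{1..N-1}. \<forall>y\<in>{x1..xN}.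
            G (u i y) = h (u i y) + \<alpha> i y * (G y - mkz x1 xN n q h y)))"

end

theory Submission
  imports Defs
begin

text \<open>On [0,1] the operator M_{n,q} averages h over the nodes [k]_q / [k+n]_q with positive
  weights which, by the q-binomial theorem, sum to 1, have mean t and variance at most
  t / [n]_q. A Korovkin-type estimate therefore gives M_{n,q_n} f \<longrightarrow> f uniformly, because
  [n]_{q_n} \<longrightarrow> \<infinity> when q_n \<longrightarrow> 1.

  The fractal function G is the fixed point of the Read-Bajraktarevic contraction. Every
  extremum of a continuous function on I is attained at a point u_i(y), where the
  self-referential equation can be evaluated. At a maximum of |G - f| this gives
  sup |G - f| \<le> s / (1 - s) sup |f - M f| with s = \<parallel>\<alpha>\<parallel>, hence the uniform convergence; at a
  minimum m of G - g the scaling condition gives m \<ge> \<alpha>_i(y) m with \<alpha>_i(y) < 1, hence G \<ge> g.\<close>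

section \<open>q-integers and the q-binomial series\<close>

lemma qint_eq_sum: "qint q k = (\<Sum>j<k. q ^ j)"
  by (simp add: qint_def sum_gp_strict)

lemma qint_0 [simp]: "qint q 0 = 0"
  by (simp add: qint_eq_sum)

lemma qint_add: "qint q (m + k) = qint q m + q ^ m * qint q k"
  by (induction k) (auto simp: qint_eq_sum algebra_simps power_add)

lemma qint_nonneg: "0 \<le> q \<Longrightarrow> 0 \<le> qint q k"
  by (simp add: qint_eq_sum sum_nonneg)

lemma qint_pos: "0 \<le> q \<Longrightarrow> 0 < k \<Longrightarrow> 0 < qint q k"
  using qint_add[of q 1 "k - 1"] qint_nonneg[of q "k - 1"] by (simp add: qint_eq_sum add_pos_nonneg)

lemma qint_mono: "0 \<le> q \<Longrightarrow> j \<le> k \<Longrightarrow> qint q j \<le> qint q k"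
  unfolding qint_eq_sum by (rule sum_mono2) auto

lemma qfact_Suc: "qfact q (Suc m) = qfact q m * qint q (Suc m)"
  by (simp add: qfact_def)

lemma qfact_0 [simp]: "qfact q 0 = 1"
  by (simp add: qfact_def)

lemma qfact_pos: "0 \<le> q \<Longrightarrow> 0 < qfact q m"
  unfolding qfact_def by (rule prod_pos) (auto intro: qint_pos)

definition mkz_coeff :: "real \<Rightarrow> nat \<Rightarrow> nat \<Rightarrow> real" where
  "mkz_coeff q n k = qbinom q (n + k) k"

lemma mkz_coeff_eq: "mkz_coeff q n k = qfact q (n + k) / (qfact q k * qfact q n)"
  by (simp add: mkz_coeff_def qbinom_def)

lemma mkz_coeff_pos: "0 \<le> q \<Longrightarrow> 0 < mkz_coeff q n k"
  by (simp add: mkz_coeff_eq qfact_pos)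

lemma mkz_coeff_0 [simp]: "0 \<le> q \<Longrightarrow> mkz_coeff q n 0 = 1"
  using qfact_pos[of q n] by (simp add: mkz_coeff_eq)

lemma mkz_coeff_0_left [simp]: "0 \<le> q \<Longrightarrow> mkz_coeff q 0 k = 1"
  using qfact_pos[of q k] by (simp add: mkz_coeff_eq)

lemma mkz_coeff_Suc_Suc:
  assumes "0 \<le> q"
  shows "mkz_coeff q (Suc n) (Suc k) = q ^ Suc n * mkz_coeff q (Suc n) k + mkz_coeff q n (Suc k)"
proof -
  define X where "X = qfact q (Suc n + k)"
  have "0 < X"
    using assms qfact_pos by (simp add: X_def)
  have "qfact q (Suc n + Suc k) = X * (qint q (Suc n) + q ^ Suc n * qint q (Suc k))"
    using qfact_Suc[of q "Suc n + k"] qint_add[of q "Suc n" "Suc k"] by (simp add: X_def)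
  moreover have "qfact q (n + Suc k) = X"
    by (simp add: X_def)
  ultimately show ?thesis
    using \<open>0 < X\<close> assms qfact_pos[of q k] qfact_pos[of q n] qint_pos[of q "Suc k"] qint_pos[of q "Suc n"]
    unfolding mkz_coeff_eq qfact_Suc[of q k] qfact_Suc[of q n] X_def[symmetric]
    by (simp add: field_simps)
qed

lemma mkz_coeff_Suc_shift:
  assumes "0 \<le> q"
  shows "mkz_coeff q n (Suc k) * qint q (Suc k) / qint q (Suc k + n) = mkz_coeff q n k"
  using assms qfact_pos[of q] qint_pos[of q "Suc k"] qint_pos[of q "Suc (n + k)"]
  by (simp add: mkz_coeff_eq qfact_Suc field_simps)

definition qpochhammer :: "real \<Rightarrow> nat \<Rightarrow> real \<Rightarrow> real" where
  "qpochhammer q n t = (\<Prod>j\<in>{0..n}. 1 - q ^ j * t)"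

lemma qpochhammer_Suc: "qpochhammer q (Suc n) t = qpochhammer q n t * (1 - q ^ Suc n * t)"
  by (simp add: qpochhammer_def prod.atLeast0_atMost_Suc)

lemma qpower_times_less_one:
  fixes q t :: real
  assumes "0 \<le> q" "q \<le> 1" "0 \<le> t" "t < 1"
  shows "0 \<le> q ^ j * t" "q ^ j * t < 1"
  using assms mult_left_le_one_le[of t "q ^ j"] power_le_one[of q j] by auto

lemma qpochhammer_pos: "0 \<le> q \<Longrightarrow> q \<le> 1 \<Longrightarrow> 0 \<le> t \<Longrightarrow> t < 1 \<Longrightarrow> 0 < qpochhammer q n t"
  unfolding qpochhammer_def using qpower_times_less_one by (intro prod_pos) auto

text \<open>The q-binomial theorem with negative exponent. Multiplying the series for n by the
  geometric series in q^(n+1) t gives the series for n + 1, by the Pascal-type recursion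
  of the coefficients.\<close>
lemma mkz_coeff_sums:
  fixes q t :: real
  assumes q: "0 \<le> q" "q \<le> 1" and t: "0 \<le> t" "t < 1"
  shows "(\<lambda>k. mkz_coeff q n k * t ^ k) sums (1 / qpochhammer q n t)"
proof (induction n)
  case 0
  show ?case using geometric_sums[of t] t q by (simp add: qpochhammer_def)
next
  case (Suc n)
  define b where "b k = mkz_coeff q n k * t ^ k" for k
  define r where "r = q ^ Suc n * t"
  have r: "0 \<le> r" "r < 1"
    unfolding r_def by (fact qpower_times_less_one[OF q t])+
  have conv: "mkz_coeff q (Suc n) k * t ^ k = (\<Sum>i\<le>k. b i * r ^ (k - i))" for k
  proof (induction k)
    case (Suc k)
    have "(\<Sum>i\<le>Suc k. b i * r ^ (Suc k - i)) = r * (\<Sum>i\<le>k. b i * r ^ (k - i)) + b (Suc k)"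
      by (simp add: sum_distrib_left Suc_diff_le mult_ac)
    then show ?case
      using Suc.IH q by (simp add: mkz_coeff_Suc_Suc b_def r_def algebra_simps)
  qed (use q in \<open>simp add: b_def\<close>)
  have "(\<lambda>k. \<Sum>i\<le>k. b i * r ^ (k - i)) sums ((\<Sum>k. b k) * (\<Sum>k. r ^ k))"
  proof (rule Cauchy_product_sums)
    show "summable (\<lambda>k. norm (b k))"
      using Suc.IH q t mkz_coeff_pos[of q n] by (simp add: b_def sums_summable abs_mult abs_of_pos)
    show "summable (\<lambda>k. norm (r ^ k))"
      using r by (simp add: summable_geometric)
  qed
  moreover have "(\<Sum>k. b k) = 1 / qpochhammer q n t"
    using Suc.IH by (simp add: b_def sums_iff)
  moreover have "(\<Sum>k. r ^ k) = 1 / (1 - r)"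
    using r suminf_geometric[of r] by simp
  ultimately have "(\<lambda>k. mkz_coeff q (Suc n) k * t ^ k) sums (1 / qpochhammer q n t * (1 / (1 - r)))"
    by (simp only: conv)
  then show ?case
    by (simp add: qpochhammer_Suc r_def)
qed

section \<open>Moments of the MKZ weights\<close>

definition mkz_weight :: "real \<Rightarrow> nat \<Rightarrow> real \<Rightarrow> nat \<Rightarrow> real" where
  "mkz_weight q n t k = qpochhammer q n t * mkz_coeff q n k * t ^ k"

definition mkz_node :: "real \<Rightarrow> nat \<Rightarrow> nat \<Rightarrow> real" where
  "mkz_node q n k = qint q k / qint q (k + n)"

lemma mkz_node_0 [simp]: "mkz_node q n 0 = 0"
  by (simp add: mkz_node_def)

lemma mkz_node_bounds: "0 \<le> q \<Longrightarrow> mkz_node q n k \<in> {0..1}"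
  using qint_nonneg[of q k] qint_nonneg[of q "k + n"] qint_mono[of q k "k + n"]
  by (auto simp: mkz_node_def divide_le_eq_1)

lemma mkz_node_Suc_le:
  assumes q: "0 \<le> q" and n: "1 \<le> n"
  shows "mkz_node q n (Suc k) \<le> 1 / qint q n + mkz_node q n k"
proof -
  define A B where "A = qint q k" and "B = qint q (k + n)"
  have A: "0 \<le> A" and B: "0 < B" and qn: "0 < qint q n"
    using qint_nonneg[OF q] qint_pos[OF q] n by (auto simp: A_def B_def)
  have num: "qint q (Suc k) = 1 + q * A" and den: "qint q (Suc k + n) = 1 + q * B"
    using qint_add[of q 1 k] qint_add[of q 1 "k + n"] by (simp_all add: A_def B_def qint_eq_sum)
  have "qint q n \<le> 1 + q * B"
    unfolding den[symmetric] by (rule qint_mono[OF q]) simp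
  then have "1 / (1 + q * B) \<le> 1 / qint q n"
    using qn by (simp add: frac_le)
  moreover have "q * A / (1 + q * B) \<le> A / B"
  proof -
    have "q * A * B \<le> A * (1 + q * B)"
      using A by (simp add: algebra_simps)
    then show ?thesis
      using A B q by (simp add: divide_simps add_pos_nonneg)
  qed
  ultimately show ?thesis
    unfolding mkz_node_def num den A_def[symmetric] B_def[symmetric] add_divide_distrib by linarith
qed

context
  fixes q t :: real and n :: nat
  assumes q: "0 \<le> q" "q \<le> 1" and t: "0 \<le> t" "t < 1"
begin

lemma mkz_weight_nonneg: "0 \<le> mkz_weight q n t k"
  unfolding mkz_weight_def using qpochhammer_pos[OF q t, of n] mkz_coeff_pos[OF q(1), of n k] t by simp

lemma mkz_weight_sums: "(\<lambda>k. mkz_weight q n t k) sums 1"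
  using sums_mult[OF mkz_coeff_sums[OF q t, of n], of "qpochhammer q n t"] qpochhammer_pos[OF q t, of n]
  by (simp add: mkz_weight_def mult.assoc)

lemma summable_mkz_weight_bounded:
  assumes "\<And>k. \<bar>g k\<bar> \<le> B"
  shows "summable (\<lambda>k. mkz_weight q n t k * g k)"
proof (rule summable_comparison_test')
  show "summable (\<lambda>k. mkz_weight q n t k * B)"
    by (intro summable_mult2 sums_summable[OF mkz_weight_sums])
  show "norm (mkz_weight q n t k * g k) \<le> mkz_weight q n t k * B" for k
    using mult_left_mono[OF assms mkz_weight_nonneg] by (simp add: abs_mult mkz_weight_nonneg)
qed

lemma mkz_weight_Suc_node: "mkz_weight q n t (Suc k) * mkz_node q n (Suc k) = t * mkz_weight q n t k"
proof -
  have "mkz_weight q n t (Suc k) * mkz_node q n (Suc k) =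
      qpochhammer q n t * t * t ^ k * (mkz_coeff q n (Suc k) * qint q (Suc k) / qint q (Suc k + n))"
    by (simp add: mkz_weight_def mkz_node_def)
  also have "\<dots> = t * mkz_weight q n t k"
    by (simp only: mkz_coeff_Suc_shift[OF q(1)]) (simp add: mkz_weight_def)
  finally show ?thesis .
qed

lemma mkz_weight_node_sums: "(\<lambda>k. mkz_weight q n t k * mkz_node q n k) sums t"
  using sums_Suc[OF sums_mult[OF mkz_weight_sums, of t, folded mkz_weight_Suc_node]] by simp

lemma summable_mkz_weight_node_sq: "summable (\<lambda>k. mkz_weight q n t k * mkz_node q n k ^ 2)"
  by (rule summable_mkz_weight_bounded[of _ 1])
    (use mkz_node_bounds[OF q(1)] in \<open>simp add: abs_le_square_iff power_le_one\<close>)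

lemma mkz_second_moment_le:
  defines "S2 \<equiv> \<Sum>k. mkz_weight q n t k * mkz_node q n k ^ 2"
  shows "S2 \<le> t" and "1 \<le> n \<Longrightarrow> S2 \<le> t\<^sup>2 + t / qint q n"
proof -
  have node: "0 \<le> mkz_node q n k" "mkz_node q n k \<le> 1" for k
    using mkz_node_bounds[OF q(1)] by auto
  have sq_le: "mkz_node q n k ^ 2 \<le> mkz_node q n k" for k
    using node[of k] by (simp add: power2_eq_square mult_left_le_one_le)
  note summ = summable_mkz_weight_node_sq
  have "S2 \<le> (\<Sum>k. mkz_weight q n t k * mkz_node q n k)"
    unfolding S2_def using summ sums_summable[OF mkz_weight_node_sums]
    by (intro suminf_le mult_left_mono[OF sq_le mkz_weight_nonneg])
  then show "S2 \<le> t"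
    using sums_unique[OF mkz_weight_node_sums] by simp
  assume n: "1 \<le> n"
  define G where "G k = t / qint q n * mkz_weight q n t k + t * (mkz_weight q n t k * mkz_node q n k)" for k
  have G: "G sums (t / qint q n * 1 + t * t)"
    unfolding G_def by (intro sums_add sums_mult mkz_weight_sums mkz_weight_node_sums)
  have "mkz_weight q n t (Suc k) * mkz_node q n (Suc k) ^ 2 = t * mkz_weight q n t k * mkz_node q n (Suc k)" for k
    using mkz_weight_Suc_node[of k] by (simp add: power2_eq_square)
  also have "\<dots> k \<le> G k" for k
    using mult_left_mono[OF mkz_node_Suc_le[OF q(1) n, of k], of "t * mkz_weight q n t k"]
      t mkz_weight_nonneg by (simp add: G_def algebra_simps)
  finally have "(\<Sum>k. mkz_weight q n t (Suc k) * mkz_node q n (Suc k) ^ 2) \<le> suminf G"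
    using summ G
    by (intro suminf_le)
      (auto simp: summable_Suc_iff[where f = "\<lambda>k. mkz_weight q n t k * mkz_node q n k ^ 2"] sums_iff)
  moreover have "S2 = (\<Sum>k. mkz_weight q n t (Suc k) * mkz_node q n (Suc k) ^ 2)"
    unfolding S2_def using suminf_split_head[OF summ] by simp
  ultimately show "S2 \<le> t\<^sup>2 + t / qint q n"
    using sums_unique[OF G] by (simp add: power2_eq_square)
qed

lemma mkz_central_moment_sums:
  "(\<lambda>k. mkz_weight q n t k * (mkz_node q n k - c)\<^sup>2) sums
     ((\<Sum>k. mkz_weight q n t k * mkz_node q n k ^ 2) - 2 * c * t + c\<^sup>2)"
proof -
  from sums_add[OF sums_diff[OF summable_sums[OF summable_mkz_weight_node_sq] sums_mult[OF mkz_weight_node_sums, of "2 * c"]]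
      sums_mult[OF mkz_weight_sums, of "c\<^sup>2"]]
  show ?thesis
    by (simp add: power2_eq_square algebra_simps)
qed

end

section \<open>Approximation by the MKZ operator\<close>

lemma weighted_average_deviation:
  fixes w p :: "nat \<Rightarrow> real" and h \<phi> :: "real \<Rightarrow> real"
  assumes w: "\<And>k. 0 \<le> w k" "w sums 1"
    and p: "\<And>k. p k \<in> S"
    and h: "\<And>s. s \<in> S \<Longrightarrow> \<bar>h s - c\<bar> \<le> e + K * \<phi> s"
    and summable_h: "summable (\<lambda>k. w k * h (p k))"
    and summable_\<phi>: "summable (\<lambda>k. w k * \<phi> (p k))"
  shows "\<bar>(\<Sum>k. w k * h (p k)) - c\<bar> \<le> e + K * (\<Sum>k. w k * \<phi> (p k))"
proof -
  have dev: "(\<lambda>k. w k * (h (p k) - c)) sums ((\<Sum>k. w k * h (p k)) - c)"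
    using sums_diff[OF summable_sums[OF summable_h] sums_mult2[OF w(2), of c]]
    by (simp add: algebra_simps)
  have bound: "(\<lambda>k. e * w k + K * (w k * \<phi> (p k))) sums (e * 1 + K * (\<Sum>k. w k * \<phi> (p k)))"
    by (intro sums_add sums_mult w(2) summable_sums[OF summable_\<phi>])
  have le: "norm (w k * (h (p k) - c)) \<le> e * w k + K * (w k * \<phi> (p k))" for k
    using mult_left_mono[OF h[OF p[of k]] w(1)[of k]] w(1)[of k]
    by (simp add: abs_mult distrib_left mult.commute mult.left_commute)
  have summable_norm_dev: "summable (\<lambda>k. norm (w k * (h (p k) - c)))"
    by (rule summable_comparison_test'[OF sums_summable[OF bound]]) (use le in simp)
  have "\<bar>(\<Sum>k. w k * h (p k)) - c\<bar> = norm (\<Sum>k. w k * (h (p k) - c))"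
    using sums_unique[OF dev] by simp
  also have "\<dots> \<le> (\<Sum>k. norm (w k * (h (p k) - c)))"
    by (rule summable_norm[OF summable_norm_dev])
  also have "\<dots> \<le> (\<Sum>k. e * w k + K * (w k * \<phi> (p k)))"
    by (rule suminf_le[OF le summable_norm_dev sums_summable[OF bound]])
  also have "\<dots> = e + K * (\<Sum>k. w k * \<phi> (p k))"
    using sums_unique[OF bound] by simp
  finally show ?thesis .
qed

lemma continuous_on_quadratic_modulus:
  fixes h :: "real \<Rightarrow> real"
  assumes "compact S" "continuous_on S h" "0 < e"
  obtains K where "0 \<le> K" "\<And>s y. s \<in> S \<Longrightarrow> y \<in> S \<Longrightarrow> \<bar>h s - h y\<bar> \<le> e + K * (s - y)\<^sup>2"
proof -
  obtain B where B: "\<And>s. s \<in> S \<Longrightarrow> \<bar>h s\<bar> \<le> B"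
    using continuous_on_compact_bound[OF assms(1,2)] by auto
  obtain d where d: "0 < d" "\<And>s y. s \<in> S \<Longrightarrow> y \<in> S \<Longrightarrow> \<bar>s - y\<bar> < d \<Longrightarrow> \<bar>h s - h y\<bar> < e"
    using compact_uniformly_continuous[OF assms(2,1)] assms(3)
    unfolding uniformly_continuous_on_def dist_real_def by metis
  define K where "K = 2 * \<bar>B\<bar> / d\<^sup>2"
  have "\<bar>h s - h y\<bar> \<le> e + K * (s - y)\<^sup>2" if s: "s \<in> S" and y: "y \<in> S" for s y
  proof (cases "\<bar>s - y\<bar> < d")
    case True
    then show ?thesis
      using d(2)[OF s y] by (simp add: K_def add_increasing2)
  next
    case False
    then have "d\<^sup>2 \<le> (s - y)\<^sup>2"
      using d(1) by (metis abs_le_square_iff abs_of_pos not_less)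
    then have "2 * \<bar>B\<bar> \<le> K * (s - y)\<^sup>2"
      using d(1) by (simp add: K_def field_simps mult_left_mono)
    moreover have "\<bar>h s - h y\<bar> \<le> 2 * \<bar>B\<bar>"
      using B[OF s] B[OF y] by linarith
    ultimately show ?thesis
      using assms(3) by linarith
  qed
  moreover have "0 \<le> K"
    by (simp add: K_def)
  ultimately show ?thesis
    using that by blast
qed

definition mkz_unit :: "real \<Rightarrow> nat \<Rightarrow> (real \<Rightarrow> real) \<Rightarrow> real \<Rightarrow> real" where
  "mkz_unit q n h t =
     (if t = 1 then h 1
      else qpochhammer q n t * (\<Sum>k. mkz_coeff q n k * t ^ k * h (mkz_node q n k)))"

lemma mkz_eq_mkz_unit:
  assumes "x1 < xN"
  shows "mkz x1 xN n q f x = mkz_unit q n (\<lambda>s. f (x1 + (xN - x1) * s)) ((x - x1) / (xN - x1))"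
proof -
  have "mkzP x1 xN n q x = (\<Prod>j\<in>{0..n}. (xN - x1 - q ^ j * (x - x1)) / (xN - x1))"
    by (simp add: mkzP_def prod_dividef)
  also have "\<dots> = qpochhammer q n ((x - x1) / (xN - x1))"
    unfolding qpochhammer_def using assms by (intro prod.cong) (auto simp: field_simps)
  finally show ?thesis
    using assms by (simp add: mkz_def mkz_unit_def mkz_coeff_def mkz_node_def)
qed

context
  fixes q :: real and h :: "real \<Rightarrow> real" and B :: real
  assumes q: "0 \<le> q" "q \<le> 1" and h_bound: "\<forall>s\<in>{0..1}. \<bar>h s\<bar> \<le> B"
begin

lemma summable_mkz_series:
  assumes "\<bar>t\<bar> < 1"
  shows "summable (\<lambda>k. mkz_coeff q n k * t ^ k * h (mkz_node q n k))"
proof (rule summable_comparison_test')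
  show "summable (\<lambda>k. B * (mkz_coeff q n k * \<bar>t\<bar> ^ k))"
    using mkz_coeff_sums[OF q _ assms, of n] by (intro summable_mult sums_summable) auto
  show "norm (mkz_coeff q n k * t ^ k * h (mkz_node q n k)) \<le> B * (mkz_coeff q n k * \<bar>t\<bar> ^ k)" for k
    using mult_left_mono[OF h_bound[rule_format, OF mkz_node_bounds[OF q(1)]], of "mkz_coeff q n k * \<bar>t\<bar> ^ k" n k]
      mkz_coeff_pos[OF q(1), of n k]
    by (simp add: abs_mult power_abs mult_ac)
qed

lemma mkz_unit_eq_weighted_sum:
  assumes "0 \<le> t" "t < 1"
  shows "mkz_unit q n h t = (\<Sum>k. mkz_weight q n t k * h (mkz_node q n k))"
proof -
  have "summable (\<lambda>k. mkz_coeff q n k * t ^ k * h (mkz_node q n k))"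
    using assms by (intro summable_mkz_series) auto
  from suminf_mult[OF this, of "qpochhammer q n t"] show ?thesis
    using assms by (simp add: mkz_unit_def mkz_weight_def mult_ac)
qed

lemma isCont_mkz_unit:
  assumes t: "\<bar>t\<bar> < 1"
  shows "isCont (mkz_unit q n h) t"
proof -
  define c where "c k = mkz_coeff q n k * h (mkz_node q n k)" for k
  have "isCont (\<lambda>t. \<Sum>k. c k * t ^ k) t"
  proof (rule isCont_powser)
    show "summable (\<lambda>k. c k * ((1 + \<bar>t\<bar>) / 2) ^ k)"
      using summable_mkz_series[of "(1 + \<bar>t\<bar>) / 2" n] t by (simp add: c_def mult_ac)
  qed (use t in auto)
  then have "isCont (\<lambda>t. qpochhammer q n t * (\<Sum>k. c k * t ^ k)) t"
    unfolding qpochhammer_def by (intro continuous_intros)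
  moreover have "\<forall>\<^sub>F s in nhds t. mkz_unit q n h s = qpochhammer q n s * (\<Sum>k. c k * s ^ k)"
    unfolding eventually_nhds
    by (rule exI[of _ "{-1<..<1}"]) (use t in \<open>auto simp: mkz_unit_def c_def mult_ac\<close>)
  ultimately show ?thesis
    by (simp add: isCont_cong)
qed

lemma mkz_unit_deviation:
  assumes t: "0 \<le> t" "t < 1" and c: "c \<in> {0..1}"
    and modulus: "\<And>s. s \<in> {0..1} \<Longrightarrow> \<bar>h s - h c\<bar> \<le> e + K * (s - c)\<^sup>2"
  shows "\<bar>mkz_unit q n h t - h c\<bar> \<le>
           e + K * ((\<Sum>k. mkz_weight q n t k * mkz_node q n k ^ 2) - 2 * c * t + c\<^sup>2)"
proof -
  have "\<bar>(\<Sum>k. mkz_weight q n t k * h (mkz_node q n k)) - h c\<bar> \<le>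
      e + K * (\<Sum>k. mkz_weight q n t k * (mkz_node q n k - c)\<^sup>2)"
  proof (rule weighted_average_deviation[OF mkz_weight_nonneg[OF q t] mkz_weight_sums[OF q t]
        mkz_node_bounds[OF q(1)] modulus])
    show "summable (\<lambda>k. mkz_weight q n t k * h (mkz_node q n k))"
      using h_bound[rule_format, OF mkz_node_bounds[OF q(1)]] by (rule summable_mkz_weight_bounded[OF q t])
    show "summable (\<lambda>k. mkz_weight q n t k * (mkz_node q n k - c)\<^sup>2)"
      using sums_summable[OF mkz_central_moment_sums[OF q t]] .
  qed
  then show ?thesis
    using t sums_unique[OF mkz_central_moment_sums[OF q t, of n c]]
    by (simp add: mkz_unit_eq_weighted_sum)
qed

end

lemma mkz_unit_deviation_estimate:
  assumes h: "continuous_on {0..1} h" and e: "0 < e"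
  obtains K where "0 \<le> K"
    "\<And>q n t c. 0 \<le> q \<Longrightarrow> q \<le> 1 \<Longrightarrow> 0 \<le> t \<Longrightarrow> t < 1 \<Longrightarrow> c \<in> {0..1} \<Longrightarrow>
       \<bar>mkz_unit q n h t - h c\<bar> \<le>
         e + K * ((\<Sum>k. mkz_weight q n t k * mkz_node q n k ^ 2) - 2 * c * t + c\<^sup>2)"
proof -
  obtain B where B: "\<forall>s\<in>{0..1}. \<bar>h s\<bar> \<le> B"
    using continuous_on_compact_bound[OF compact_Icc h] by (metis real_norm_def)
  obtain K where K: "0 \<le> K"
    and modulus: "\<And>s y. s \<in> {0..1} \<Longrightarrow> y \<in> {0..1} \<Longrightarrow> \<bar>h s - h y\<bar> \<le> e + K * (s - y)\<^sup>2"
    using continuous_on_quadratic_modulus[OF compact_Icc h e] by blast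
  have "\<bar>mkz_unit q n h t - h c\<bar> \<le>
      e + K * ((\<Sum>k. mkz_weight q n t k * mkz_node q n k ^ 2) - 2 * c * t + c\<^sup>2)"
    if "0 \<le> q" "q \<le> 1" "0 \<le> t" "t < 1" "c \<in> {0..1}" for q n t c
    using modulus that(5) by (intro mkz_unit_deviation[OF that(1,2) B that(3-5)]) auto
  with K that show ?thesis
    by blast
qed

lemma mkz_unit_approx:
  assumes h: "continuous_on {0..1} h" and e: "0 < e"
  obtains K where "0 \<le> K"
    "\<And>q n t. 0 \<le> q \<Longrightarrow> q \<le> 1 \<Longrightarrow> 1 \<le> n \<Longrightarrow> t \<in> {0..1} \<Longrightarrow>
       \<bar>mkz_unit q n h t - h t\<bar> \<le> e + K / qint q n"
proof -
  obtain K where K: "0 \<le> K"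
    and dev: "\<And>q n t c. 0 \<le> q \<Longrightarrow> q \<le> 1 \<Longrightarrow> 0 \<le> t \<Longrightarrow> t < 1 \<Longrightarrow> c \<in> {0..1} \<Longrightarrow>
       \<bar>mkz_unit q n h t - h c\<bar> \<le>
         e + K * ((\<Sum>k. mkz_weight q n t k * mkz_node q n k ^ 2) - 2 * c * t + c\<^sup>2)"
    using mkz_unit_deviation_estimate[OF h e] by blast
  have "\<bar>mkz_unit q n h t - h t\<bar> \<le> e + K / qint q n"
    if q: "0 \<le> q" "q \<le> 1" and n: "1 \<le> n" and t: "t \<in> {0..1}" for q n t
  proof (cases "t = 1")
    case True
    then show ?thesis
      using e K qint_nonneg[OF q(1), of n] by (simp add: mkz_unit_def)
  next
    case False
    then have t': "0 \<le> t" "t < 1"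
      using t by auto
    have "t / qint q n \<le> 1 / qint q n"
      using t' qint_nonneg[OF q(1), of n] by (simp add: divide_right_mono)
    then have "K * ((\<Sum>k. mkz_weight q n t k * mkz_node q n k ^ 2) - 2 * t * t + t\<^sup>2) \<le> K * (1 / qint q n)"
      using mkz_second_moment_le(2)[OF q t' n] K by (intro mult_left_mono) (simp_all add: power2_eq_square)
    then show ?thesis
      using dev[where c = t and n = n, OF q t' t] by simp
  qed
  with K that show ?thesis
    by blast
qed

lemma mkz_unit_approx_right_end:
  assumes h: "continuous_on {0..1} h" and e: "0 < e" and q: "0 \<le> q" "q \<le> 1"
  obtains K where "0 \<le> K" "\<And>t. t \<in> {0..<1} \<Longrightarrow> \<bar>mkz_unit q n h t - h 1\<bar> \<le> e + K * (1 - t)"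
proof -
  obtain K where K: "0 \<le> K"
    and dev: "\<And>q n t c. 0 \<le> q \<Longrightarrow> q \<le> 1 \<Longrightarrow> 0 \<le> t \<Longrightarrow> t < 1 \<Longrightarrow> c \<in> {0..1} \<Longrightarrow>
       \<bar>mkz_unit q n h t - h c\<bar> \<le>
         e + K * ((\<Sum>k. mkz_weight q n t k * mkz_node q n k ^ 2) - 2 * c * t + c\<^sup>2)"
    using mkz_unit_deviation_estimate[OF h e] by blast
  have "\<bar>mkz_unit q n h t - h 1\<bar> \<le> e + K * (1 - t)" if t: "0 \<le> t" "t < 1" for t
  proof -
    have "\<bar>mkz_unit q n h t - h 1\<bar> \<le>
        e + K * ((\<Sum>k. mkz_weight q n t k * mkz_node q n k ^ 2) - 2 * 1 * t + 1\<^sup>2)"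
      using dev[where c = 1 and n = n, OF q t] by simp
    also have "\<dots> \<le> e + K * (1 - t)"
      using mkz_second_moment_le(1)[OF q t, of n] K by (intro add_left_mono mult_left_mono) auto
    finally show ?thesis .
  qed
  with K that show ?thesis
    by auto
qed

lemma continuous_on_mkz_unit:
  assumes h: "continuous_on {0..1} h" and q: "0 \<le> q" "q \<le> 1"
  shows "continuous_on {0..1} (mkz_unit q n h)"
  unfolding continuous_on_eq_continuous_within
proof
  fix t :: real
  assume t: "t \<in> {0..1}"
  obtain B where B: "\<forall>s\<in>{0..1}. \<bar>h s\<bar> \<le> B"
    using continuous_on_compact_bound[OF compact_Icc h] by (metis real_norm_def)
  show "continuous (at t within {0..1}) (mkz_unit q n h)"
  proof (cases "t = 1")
    case False
    then have "\<bar>t\<bar> < 1"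
      using t by auto
    then show ?thesis
      by (rule continuous_at_imp_continuous_at_within[OF isCont_mkz_unit[OF q B]])
  next
    case True
    have "(mkz_unit q n h \<longlongrightarrow> h 1) (at 1 within {0..1})"
    proof (rule tendstoI)
      fix e :: real
      assume e: "0 < e"
      obtain K where K: "0 \<le> K" "\<And>s. s \<in> {0..<1} \<Longrightarrow> \<bar>mkz_unit q n h s - h 1\<bar> \<le> e / 2 + K * (1 - s)"
        using mkz_unit_approx_right_end[OF h half_gt_zero[OF e] q] by blast
      have "dist (mkz_unit q n h s) (h 1) < e"
        if s: "s \<in> {0..1}" "s \<noteq> 1" "dist s 1 < e / (2 * (K + 1))" for s
      proof -
        have "K * (1 - s) \<le> K * (e / (2 * (K + 1)))"
          using s K by (intro mult_left_mono) (simp_all add: dist_real_def)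
        also have "\<dots> < e / 2"
          using K e by (simp add: field_simps)
        finally show ?thesis
          using K(2)[of s] s by (simp add: dist_real_def)
      qed
      then show "\<forall>\<^sub>F s in at 1 within {0..1}. dist (mkz_unit q n h s) (h 1) < e"
        unfolding eventually_at using e K by (intro exI[of _ "e / (2 * (K + 1))"]) simp
    qed
    then show ?thesis
      using True by (simp add: continuous_within mkz_unit_def)
  qed
qed

lemma qint_tendsto_at_top:
  fixes q :: "nat \<Rightarrow> real"
  assumes q: "\<And>n. 0 \<le> q n \<and> q n \<le> 1" and q_lim: "q \<longlonglongrightarrow> 1"
  shows "filterlim (\<lambda>n. qint (q n) n) at_top sequentially"
  unfolding filterlim_at_top
proof
  fix M :: real
  define m where "m = nat \<lceil>2 * M\<rceil>"
  have "(\<lambda>n. q n ^ m) \<longlonglongrightarrow> 1"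
    using tendsto_power[OF q_lim, of m] by simp
  then have "\<forall>\<^sub>F n in sequentially. 1 / 2 < q n ^ m"
    by (rule order_tendstoD) simp
  with eventually_ge_at_top[of m] show "\<forall>\<^sub>F n in sequentially. M \<le> qint (q n) n"
  proof eventually_elim
    case (elim n)
    have "real m * (1 / 2) \<le> real m * q n ^ m"
      using elim(2) by (intro mult_left_mono) auto
    also have "\<dots> = (\<Sum>j<m. q n ^ m)"
      by simp
    also have "\<dots> \<le> (\<Sum>j<m. q n ^ j)"
      using q[of n] by (intro sum_mono power_decreasing) auto
    also have "\<dots> \<le> qint (q n) n"
      unfolding qint_eq_sum using elim(1) q[of n] by (intro sum_mono2) auto
    finally show ?case
      unfolding m_def by linarith
  qed
qed

lemma mkz_unit_uniform_limit:
  fixes q :: "nat \<Rightarrow> real"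
  assumes h: "continuous_on {0..1} h"
    and q: "\<And>n. 0 \<le> q n \<and> q n \<le> 1" and q_lim: "q \<longlonglongrightarrow> 1"
  shows "uniform_limit {0..1} (\<lambda>n. mkz_unit (q n) n h) h sequentially"
  unfolding uniform_limit_iff
proof (intro allI impI)
  fix e :: real
  assume e: "0 < e"
  obtain K where K: "0 \<le> K" "\<And>q n t. 0 \<le> q \<Longrightarrow> q \<le> 1 \<Longrightarrow> 1 \<le> n \<Longrightarrow> t \<in> {0..1} \<Longrightarrow>
       \<bar>mkz_unit q n h t - h t\<bar> \<le> e / 2 + K / qint q n"
    using mkz_unit_approx[OF h half_gt_zero[OF e]] by blast
  have "\<forall>\<^sub>F n in sequentially. 2 * (K + 1) / e \<le> qint (q n) n"
    using qint_tendsto_at_top[OF q q_lim] by (simp add: filterlim_at_top)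
  with eventually_ge_at_top[of 1]
  show "\<forall>\<^sub>F n in sequentially. \<forall>t\<in>{0..1}. dist (mkz_unit (q n) n h t) (h t) < e"
  proof eventually_elim
    case (elim n)
    have M: "0 < 2 * (K + 1) / e"
      using K e by simp
    have "K / qint (q n) n \<le> K / (2 * (K + 1) / e)"
      using elim(2) K M by (intro divide_left_mono mult_pos_pos) auto
    also have "\<dots> < e / 2"
      using K e by (simp add: field_simps)
    finally have small: "K / qint (q n) n < e / 2" .
    show ?case
    proof
      fix t :: real
      assume "t \<in> {0..1}"
      then have "\<bar>mkz_unit (q n) n h t - h t\<bar> \<le> e / 2 + K / qint (q n) n"
        using K(2)[of "q n" n t] q[of n] elim(1) by simp
      with small show "dist (mkz_unit (q n) n h t) (h t) < e"
        unfolding dist_real_def by linarith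
    qed
  qed
qed

context
  fixes x1 xN :: real and f :: "real \<Rightarrow> real"
  assumes I: "x1 < xN" and f: "continuous_on {x1..xN} f"
begin

lemma continuous_on_rescaled: "continuous_on {0..1} (\<lambda>s. f (x1 + (xN - x1) * s))"
proof (rule continuous_on_compose2[OF f])
  show "(\<lambda>s. x1 + (xN - x1) * s) ` {0..1} \<subseteq> {x1..xN}"
  proof (rule image_subsetI)
    fix s :: real
    assume s: "s \<in> {0..1}"
    then have "0 \<le> (xN - x1) * s" "(xN - x1) * s \<le> xN - x1"
      using I by (auto intro: mult_left_le)
    then show "x1 + (xN - x1) * s \<in> {x1..xN}"
      unfolding atLeastAtMost_iff by linarith
  qed
qed (intro continuous_intros)

lemma rescale_in_unit_interval: "(\<lambda>x. (x - x1) / (xN - x1)) \<in> {x1..xN} \<rightarrow> {0..1}"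
  using I by (auto simp: divide_simps)

lemma mkz_at_left_end: "0 \<le> q \<Longrightarrow> mkz x1 xN n q f x1 = f x1"
  using I powser_zero[of "\<lambda>k. mkz_coeff q n k * f (x1 + (xN - x1) * mkz_node q n k)"]
  by (simp add: mkz_eq_mkz_unit mkz_unit_def qpochhammer_def mult_ac)

lemma continuous_on_mkz:
  assumes "0 \<le> q" "q \<le> 1"
  shows "continuous_on {x1..xN} (mkz x1 xN n q f)"
proof -
  have "continuous_on {x1..xN}
      (\<lambda>x. mkz_unit q n (\<lambda>s. f (x1 + (xN - x1) * s)) ((x - x1) / (xN - x1)))"
    using I rescale_in_unit_interval
    by (intro continuous_on_compose2[OF continuous_on_mkz_unit[OF continuous_on_rescaled assms]]
        continuous_intros) auto
  then show ?thesis
    using I by (simp add: mkz_eq_mkz_unit)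
qed

lemma mkz_uniform_limit:
  fixes q :: "nat \<Rightarrow> real"
  assumes "\<And>n. 0 \<le> q n \<and> q n \<le> 1" "q \<longlonglongrightarrow> 1"
  shows "uniform_limit {x1..xN} (\<lambda>n. mkz x1 xN n (q n) f) f sequentially"
proof -
  have "uniform_limit {x1..xN}
      (\<lambda>n x. mkz_unit (q n) n (\<lambda>s. f (x1 + (xN - x1) * s)) ((x - x1) / (xN - x1)))
      (\<lambda>x. f (x1 + (xN - x1) * ((x - x1) / (xN - x1)))) sequentially"
    by (rule uniform_limit_compose'[OF mkz_unit_uniform_limit[OF continuous_on_rescaled assms]
          rescale_in_unit_interval])
  moreover have "(\<lambda>n. mkz x1 xN n (q n) f) =
      (\<lambda>n x. mkz_unit (q n) n (\<lambda>s. f (x1 + (xN - x1) * s)) ((x - x1) / (xN - x1)))"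
    using I by (simp add: fun_eq_iff mkz_eq_mkz_unit)
  ultimately show ?thesis
    using I by simp
qed

end

section \<open>Self-referential equations on a partition\<close>

locale affine_partition =
  fixes x :: "nat \<Rightarrow> real" and N :: nat and a b :: "nat \<Rightarrow> real"
  assumes N: "N \<ge> 2"
    and part: "\<And>i. i \<in> {1..<N} \<Longrightarrow> x i < x (i + 1)"
    and u1: "\<And>i. i \<in> {1..N-1} \<Longrightarrow> a i * x 1 + b i = x i"
    and uN: "\<And>i. i \<in> {1..N-1} \<Longrightarrow> a i * x N + b i = x (i + 1)"
begin

abbreviation I :: "real set" where
  "I \<equiv> {x 1..x N}"

lemma x_mono: "1 \<le> i \<Longrightarrow> i \<le> j \<Longrightarrow> j \<le> N \<Longrightarrow> x i \<le> x j"
proof (rule lift_Suc_mono_le_ivl[of "{1..<N}"])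
  show "x n \<le> x (Suc n)" if "n \<in> {1..<N}" for n
    using part[OF that] by simp
qed auto

lemma x_first_less_last: "x 1 < x N"
  using part[of 1] x_mono[of 2 N] N by (simp add: numeral_2_eq_2)

lemma I_nonempty: "I \<noteq> {}"
  using x_first_less_last by simp

lemma piece_subset: "i \<in> {1..N-1} \<Longrightarrow> {x i..x (i + 1)} \<subseteq> I"
  using x_mono[of 1 i] x_mono[of "i + 1" N] by auto

lemma slope_pos:
  assumes i: "i \<in> {1..N-1}"
  shows "0 < a i"
proof -
  have "a i * (x N - x 1) = x (i + 1) - x i"
    using u1[OF i] uN[OF i] by (simp add: algebra_simps)
  moreover have "x i < x (i + 1)"
    using part[of i] i by auto
  ultimately have "0 < a i * (x N - x 1)"
    by linarith
  then show ?thesis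
    using x_first_less_last by (simp add: zero_less_mult_iff)
qed

lemma affine_in_piece:
  assumes i: "i \<in> {1..N-1}" and y: "y \<in> I"
  shows "a i * y + b i \<in> {x i..x (i + 1)}"
proof -
  have "a i * x 1 \<le> a i * y" "a i * y \<le> a i * x N"
    using slope_pos[OF i] y by (auto intro: mult_left_mono)
  then show ?thesis
    using u1[OF i] uN[OF i] by auto
qed

lemma affine_in_I: "i \<in> {1..N-1} \<Longrightarrow> y \<in> I \<Longrightarrow> a i * y + b i \<in> I"
  using affine_in_piece piece_subset by blast

lemma affine_inverse: "i \<in> {1..N-1} \<Longrightarrow> a i * ((z - b i) / a i) + b i = z"
  using slope_pos[of i] by simp

lemma affine_inverse_in_I: "i \<in> {1..N-1} \<Longrightarrow> z \<in> {x i..x (i + 1)} \<Longrightarrow> (z - b i) / a i \<in> I"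
  using slope_pos[of i] u1[of i] uN[of i] by (auto simp: field_simps)

lemma I_covered_by_pieces:
  assumes z: "z \<in> I"
  shows "\<exists>i\<in>{1..N-1}. z \<in> {x i..x (i + 1)}"
proof -
  define J where "J = {i \<in> {1..N-1}. x i \<le> z}"
  define i where "i = Max J"
  have "finite J" "1 \<in> J"
    using z N by (auto simp: J_def)
  then have i: "i \<in> J" and i_max: "\<And>j. j \<in> J \<Longrightarrow> j \<le> i"
    unfolding i_def by (auto intro: Max_in)
  have "z \<le> x (i + 1)"
  proof (cases "i + 1 \<le> N - 1")
    case True
    then have "i + 1 \<notin> J"
      using i_max by fastforce
    then show ?thesis
      using True by (auto simp: J_def)
  next
    case False
    then have "i + 1 = N"
      using i by (auto simp: J_def)
    then show ?thesis
      using z by simp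
  qed
  then show ?thesis
    using i by (auto simp: J_def)
qed

lemma I_eq_Union_pieces: "I = (\<Union>i\<in>{1..N-1}. {x i..x (i + 1)})"
  using I_covered_by_pieces piece_subset by blast

lemma pieces_overlap:
  assumes "i \<in> {1..N-1}" "j \<in> {1..N-1}" "i < j" "z \<in> {x i..x (i + 1)}" "z \<in> {x j..x (j + 1)}"
  shows "z = x (i + 1)" "z = x j"
proof -
  have "x (i + 1) \<le> x j"
    using assms by (intro x_mono) auto
  then show "z = x (i + 1)" "z = x j"
    using assms by auto
qed

lemma I_self_covering: "z \<in> I \<Longrightarrow> \<exists>i\<in>{1..N-1}. \<exists>y\<in>I. z = a i * y + b i"
  using I_covered_by_pieces affine_inverse affine_inverse_in_I by metis

text \<open>The maximum of a continuous function on I is attained at some image point u_i(y): this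
  turns self-similar estimates into global ones.\<close>
lemma self_similar_bound:
  fixes D :: "real \<Rightarrow> real"
  assumes D: "continuous_on I D" and s: "0 \<le> s" "s < 1"
    and step: "\<And>i y. i \<in> {1..N-1} \<Longrightarrow> y \<in> I \<Longrightarrow> \<bar>D (a i * y + b i)\<bar> \<le> s * \<bar>D y\<bar> + c"
    and z: "z \<in> I"
  shows "\<bar>D z\<bar> \<le> c / (1 - s)"
proof -
  obtain z0 where z0: "z0 \<in> I" and max: "\<And>z. z \<in> I \<Longrightarrow> \<bar>D z\<bar> \<le> \<bar>D z0\<bar>"
    using continuous_attains_sup[OF compact_Icc I_nonempty continuous_on_rabs[OF D]] by blast
  obtain i y where i: "i \<in> {1..N-1}" and y: "y \<in> I" and z0_eq: "z0 = a i * y + b i"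
    using I_self_covering[OF z0] by blast
  have "\<bar>D z0\<bar> \<le> s * \<bar>D z0\<bar> + c"
    using step[OF i y] mult_left_mono[OF max[OF y] s(1)] unfolding z0_eq by linarith
  then have "\<bar>D z0\<bar> \<le> c / (1 - s)"
    using s by (simp add: field_simps)
  then show ?thesis
    using max[OF z] by linarith
qed

lemma self_similar_nonneg:
  fixes D :: "real \<Rightarrow> real"
  assumes D: "continuous_on I D"
    and c: "\<And>i y. i \<in> {1..N-1} \<Longrightarrow> y \<in> I \<Longrightarrow> 0 \<le> c i y \<and> c i y < 1"
    and step: "\<And>i y. i \<in> {1..N-1} \<Longrightarrow> y \<in> I \<Longrightarrow> c i y * D y \<le> D (a i * y + b i)"
    and z: "z \<in> I"
  shows "0 \<le> D z"
proof -
  obtain z0 where z0: "z0 \<in> I" and min: "\<And>z. z \<in> I \<Longrightarrow> D z0 \<le> D z"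
    using continuous_attains_inf[OF compact_Icc I_nonempty D] by blast
  obtain i y where i: "i \<in> {1..N-1}" and y: "y \<in> I" and z0_eq: "z0 = a i * y + b i"
    using I_self_covering[OF z0] by blast
  have "c i y * D z0 \<le> D z0"
    using step[OF i y] mult_left_mono[OF min[OF y]] c[OF i y] z0_eq by force
  then have "0 \<le> D z0"
    using c[OF i y] by (metis mult_le_cancel_right2 not_le)
  then show ?thesis
    using min[OF z] by linarith
qed

end

lemma ext_cont_bcontfun:
  fixes g :: "'a::euclidean_space \<Rightarrow> 'b::metric_space"
  assumes "continuous_on (cbox a b) g"
  shows "ext_cont g a b \<in> bcontfun"
proof -
  obtain h :: "'a \<Rightarrow>\<^sub>C 'b" where "\<And>z. h z = g (clamp a b z)"
    using continuous_on_cbox_bcontfunE[OF assms] by metis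
  then have "ext_cont g a b = apply_bcontfun h"
    by (simp add: fun_eq_iff ext_cont_def)
  then show ?thesis
    using apply_bcontfun[of h] by simp
qed

text \<open>F stands for the base function M_{n,q} f. The definition of mkz_fractal additionally
  normalises the solution to 0 outside I, which makes it unique as a function on the line.\<close>
locale fractal_equation = affine_partition +
  fixes f F :: "real \<Rightarrow> real" and \<alpha> :: "nat \<Rightarrow> real \<Rightarrow> real" and s :: real
  assumes f_cont: "continuous_on {x 1..x N} f"
    and F_cont: "continuous_on {x 1..x N} F"
    and F_left: "F (x 1) = f (x 1)" and F_right: "F (x N) = f (x N)"
    and \<alpha>_cont: "\<And>i. i \<in> {1..N-1} \<Longrightarrow> continuous_on {x 1..x N} (\<alpha> i)"
    and \<alpha>_bound: "\<And>i y. i \<in> {1..N-1} \<Longrightarrow> y \<in> {x 1..x N} \<Longrightarrow> \<bar>\<alpha> i y\<bar> \<le> s"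
    and s_less_1: "s < 1"
begin

definition fractal_solution :: "(real \<Rightarrow> real) \<Rightarrow> bool" where
  "fractal_solution G \<longleftrightarrow> continuous_on I G \<and>
     (\<forall>i\<in>{1..N-1}. \<forall>y\<in>I. G (a i * y + b i) = f (a i * y + b i) + \<alpha> i y * (G y - F y))"

lemma s_nonneg: "0 \<le> s"
  using \<alpha>_bound[of 1 "x 1"] N x_first_less_last by force

lemma fractal_solution_unique:
  assumes "fractal_solution G1" "fractal_solution G2" "z \<in> I"
  shows "G1 z = G2 z"
proof -
  have "\<bar>G1 z - G2 z\<bar> \<le> 0 / (1 - s)"
  proof (rule self_similar_bound[OF _ s_nonneg s_less_1 _ assms(3)])
    show "continuous_on I (\<lambda>z. G1 z - G2 z)"
      using assms by (intro continuous_intros) (auto simp: fractal_solution_def)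
    fix i y
    assume iy: "i \<in> {1..N-1}" "y \<in> I"
    have "G1 (a i * y + b i) = f (a i * y + b i) + \<alpha> i y * (G1 y - F y)"
      "G2 (a i * y + b i) = f (a i * y + b i) + \<alpha> i y * (G2 y - F y)"
      using assms iy unfolding fractal_solution_def by auto
    then have "G1 (a i * y + b i) - G2 (a i * y + b i) = \<alpha> i y * (G1 y - G2 y)"
      by (simp add: algebra_simps)
    then show "\<bar>G1 (a i * y + b i) - G2 (a i * y + b i)\<bar> \<le> s * \<bar>G1 y - G2 y\<bar> + 0"
      using \<alpha>_bound[OF iy] by (simp add: abs_mult mult_right_mono)
  qed
  then show ?thesis
    by simp
qed

lemma fractal_solution_near_f:
  assumes G: "fractal_solution G" and E: "\<And>y. y \<in> I \<Longrightarrow> \<bar>f y - F y\<bar> \<le> E" and z: "z \<in> I"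
  shows "\<bar>G z - f z\<bar> \<le> s * E / (1 - s)"
proof (rule self_similar_bound[OF _ s_nonneg s_less_1 _ z])
  show "continuous_on I (\<lambda>z. G z - f z)"
    using G f_cont by (intro continuous_intros) (auto simp: fractal_solution_def)
  fix i y
  assume iy: "i \<in> {1..N-1}" "y \<in> I"
  then have "\<bar>G (a i * y + b i) - f (a i * y + b i)\<bar> = \<bar>\<alpha> i y\<bar> * \<bar>(G y - f y) + (f y - F y)\<bar>"
    using G by (simp add: fractal_solution_def abs_mult)
  also have "\<dots> \<le> s * (\<bar>G y - f y\<bar> + E)"
    using \<alpha>_bound[OF iy] E[OF iy(2)] s_nonneg
    by (intro mult_mono order.trans[OF abs_triangle_ineq]) auto
  finally show "\<bar>G (a i * y + b i) - f (a i * y + b i)\<bar> \<le> s * \<bar>G y - f y\<bar> + s * E"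
    by (simp add: algebra_simps)
qed

lemma fractal_solution_ge:
  assumes G: "fractal_solution G" and g: "continuous_on I g"
    and \<alpha>_nonneg: "\<And>i y. i \<in> {1..N-1} \<Longrightarrow> y \<in> I \<Longrightarrow> 0 \<le> \<alpha> i y"
    and gap: "\<And>i y. i \<in> {1..N-1} \<Longrightarrow> y \<in> I \<Longrightarrow>
      \<alpha> i y * (F y - g y) \<le> f (a i * y + b i) - g (a i * y + b i)"
    and z: "z \<in> I"
  shows "g z \<le> G z"
proof -
  have "0 \<le> G z - g z"
  proof (rule self_similar_nonneg[where c = \<alpha>, OF _ _ _ z])
    show "continuous_on I (\<lambda>z. G z - g z)"
      using G g by (intro continuous_intros) (auto simp: fractal_solution_def)
    fix i y
    assume iy: "i \<in> {1..N-1}" "y \<in> I"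
    show "0 \<le> \<alpha> i y \<and> \<alpha> i y < 1"
      using \<alpha>_nonneg[OF iy] \<alpha>_bound[OF iy] s_less_1 by auto
    have "G (a i * y + b i) - g (a i * y + b i) =
        (f (a i * y + b i) - g (a i * y + b i) - \<alpha> i y * (F y - g y)) + \<alpha> i y * (G y - g y)"
      using G iy by (simp add: fractal_solution_def algebra_simps)
    then show "\<alpha> i y * (G y - g y) \<le> G (a i * y + b i) - g (a i * y + b i)"
      using gap[OF iy] by linarith
  qed
  then show ?thesis
    by simp
qed

definition piece_value :: "(real \<Rightarrow> real) \<Rightarrow> nat \<Rightarrow> real \<Rightarrow> real" where
  "piece_value H i z = f z + \<alpha> i ((z - b i) / a i) * (H ((z - b i) / a i) - F ((z - b i) / a i))"

definition piece_index :: "real \<Rightarrow> nat" where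
  "piece_index z = (SOME i. i \<in> {1..N-1} \<and> z \<in> {x i..x (i + 1)})"

definition read_bajraktarevic :: "(real \<Rightarrow> real) \<Rightarrow> real \<Rightarrow> real" where
  "read_bajraktarevic H z = piece_value H (piece_index z) z"

lemma piece_value_affine:
  "i \<in> {1..N-1} \<Longrightarrow> piece_value H i (a i * y + b i) = f (a i * y + b i) + \<alpha> i y * (H y - F y)"
  using slope_pos[of i] by (simp add: piece_value_def)

context
  fixes H :: "real \<Rightarrow> real"
  assumes H_left: "H (x 1) = f (x 1)" and H_right: "H (x N) = f (x N)"
begin

lemma piece_value_ends:
  assumes i: "i \<in> {1..N-1}"
  shows "piece_value H i (x i) = f (x i)" "piece_value H i (x (i + 1)) = f (x (i + 1))"
  using piece_value_affine[OF i, of H "x 1"] piece_value_affine[OF i, of H "x N"]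
  unfolding u1[OF i] uN[OF i] H_left H_right F_left F_right by simp_all

lemma read_bajraktarevic_eq:
  assumes i: "i \<in> {1..N-1}" and z: "z \<in> {x i..x (i + 1)}"
  shows "read_bajraktarevic H z = piece_value H i z"
proof -
  define j where "j = piece_index z"
  have j: "j \<in> {1..N-1}" "z \<in> {x j..x (j + 1)}"
    using someI[of "\<lambda>i. i \<in> {1..N-1} \<and> z \<in> {x i..x (i + 1)}", OF conjI[OF i z]]
    by (simp_all add: j_def piece_index_def)
  text \<open>Distinct pieces only share a partition point, where both formulas give the value of f.\<close>
  have "piece_value H j z = piece_value H i z"
  proof (cases i j rule: linorder_cases)
    case less
    then show ?thesis
      using pieces_overlap[OF i j(1) less z j(2)] piece_value_ends[OF i] piece_value_ends[OF j(1)]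
      by simp
  next
    case greater
    then show ?thesis
      using pieces_overlap[OF j(1) i greater j(2) z] piece_value_ends[OF i] piece_value_ends[OF j(1)]
      by simp
  qed simp
  then show ?thesis
    by (simp add: read_bajraktarevic_def j_def)
qed

lemma read_bajraktarevic_affine:
  "i \<in> {1..N-1} \<Longrightarrow> y \<in> I \<Longrightarrow>
    read_bajraktarevic H (a i * y + b i) = f (a i * y + b i) + \<alpha> i y * (H y - F y)"
  using read_bajraktarevic_eq affine_in_piece piece_value_affine by simp

lemma read_bajraktarevic_ends:
  "read_bajraktarevic H (x 1) = f (x 1)" "read_bajraktarevic H (x N) = f (x N)"
proof -
  have first: "1 \<in> {1..N-1}" and last: "N - 1 \<in> {1..N-1}" and "N - 1 + 1 = N"
    using N by auto
  then have "x 1 \<in> {x 1..x (1 + 1)}" "x N \<in> {x (N - 1)..x (N - 1 + 1)}"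
    using part[of 1] part[of "N - 1"] N by auto
  then show "read_bajraktarevic H (x 1) = f (x 1)" "read_bajraktarevic H (x N) = f (x N)"
    using read_bajraktarevic_eq[OF first] read_bajraktarevic_eq[OF last]
      piece_value_ends[OF first] piece_value_ends[OF last] \<open>N - 1 + 1 = N\<close>
    by simp_all
qed

lemma continuous_on_read_bajraktarevic:
  assumes H: "continuous_on I H"
  shows "continuous_on I (read_bajraktarevic H)"
  unfolding I_eq_Union_pieces
proof (rule continuous_on_closed_Union)
  fix i
  assume i: "i \<in> {1..N-1}"
  let ?v = "\<lambda>z. (z - b i) / a i"
  have v: "continuous_on {x i..x (i + 1)} ?v" "?v ` {x i..x (i + 1)} \<subseteq> I"
    using slope_pos[OF i] affine_inverse_in_I[OF i] by (auto intro!: continuous_intros)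
  have "continuous_on {x i..x (i + 1)} (piece_value H i)"
    unfolding piece_value_def
    by (intro continuous_intros continuous_on_subset[OF f_cont piece_subset[OF i]]
        continuous_on_compose2[OF \<alpha>_cont[OF i] v] continuous_on_compose2[OF H v]
        continuous_on_compose2[OF F_cont v])
  then show "continuous_on {x i..x (i + 1)} (read_bajraktarevic H)"
    by (rule continuous_on_cong[THEN iffD1, OF refl, rotated]) (simp add: read_bajraktarevic_eq[OF i])
qed auto

end

lemma read_bajraktarevic_diff:
  assumes "H1 (x 1) = f (x 1)" "H1 (x N) = f (x N)" "H2 (x 1) = f (x 1)" "H2 (x N) = f (x N)"
    and z: "z \<in> I"
  obtains y where "y \<in> I" "\<bar>read_bajraktarevic H1 z - read_bajraktarevic H2 z\<bar> \<le> s * \<bar>H1 y - H2 y\<bar>"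
proof -
  obtain i y where iy: "i \<in> {1..N-1}" "y \<in> I" and z_eq: "z = a i * y + b i"
    using I_self_covering[OF z] by blast
  have "read_bajraktarevic H1 z - read_bajraktarevic H2 z = \<alpha> i y * (H1 y - H2 y)"
    using read_bajraktarevic_affine[OF assms(1,2) iy] read_bajraktarevic_affine[OF assms(3,4) iy] z_eq
    by (simp add: algebra_simps)
  then have "\<bar>read_bajraktarevic H1 z - read_bajraktarevic H2 z\<bar> \<le> s * \<bar>H1 y - H2 y\<bar>"
    using \<alpha>_bound[OF iy] by (simp add: abs_mult mult_right_mono)
  with iy that show ?thesis
    by blast
qed

text \<open>Banach's fixed point theorem for the Read-Bajraktarevic operator, acting on bounded
  continuous functions on the real line that interpolate f at both ends of I; functions on I
  are extended to the line by clamping.\<close>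
lemma fractal_solution_exists: "\<exists>G. fractal_solution G"
proof -
  have I_cbox: "I = cbox (x 1) (x N)"
    by (simp add: cbox_interval)
  define S where "S = PiC {x 1, x N} (\<lambda>z. {f z})"
  define T where "T H = Bcontfun (ext_cont (read_bajraktarevic (apply_bcontfun H)) (x 1) (x N))"
    for H :: "real \<Rightarrow>\<^sub>C real"
  have S_iff: "H \<in> S \<longleftrightarrow> H (x 1) = f (x 1) \<and> H (x N) = f (x N)" for H
    by (auto simp: S_def mem_PiC_iff)
  have T_apply: "apply_bcontfun (T H) z = read_bajraktarevic H (clamp (x 1) (x N) z)"
    and clamp_in_I: "clamp (x 1) (x N) z \<in> I"
    and T_on_I: "z \<in> I \<Longrightarrow> apply_bcontfun (T H) z = read_bajraktarevic H z"
    if "H \<in> S" for H z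
  proof -
    have "ext_cont (read_bajraktarevic H) (x 1) (x N) \<in> bcontfun"
      using that continuous_on_read_bajraktarevic[of H] I_cbox
      by (intro ext_cont_bcontfun) (simp add: S_iff)
    then show T_apply: "apply_bcontfun (T H) z = read_bajraktarevic H (clamp (x 1) (x N) z)"
      by (simp add: T_def Bcontfun_inverse ext_cont_def)
    show "clamp (x 1) (x N) z \<in> I"
      using x_first_less_last clamp_in_interval[of "x 1" "x N" z] I_cbox by simp
    show "z \<in> I \<Longrightarrow> apply_bcontfun (T H) z = read_bajraktarevic H z"
      using T_apply I_cbox by simp
  qed
  have "complete S"
    unfolding S_def by (simp add: complete_eq_closed closed_PiC)
  moreover have "S \<noteq> {}"
  proof -
    have "ext_cont f (x 1) (x N) \<in> bcontfun"
      using f_cont I_cbox by (intro ext_cont_bcontfun) simp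
    then have "Bcontfun (ext_cont f (x 1) (x N)) \<in> S"
      using x_first_less_last I_cbox by (simp add: S_iff Bcontfun_inverse)
    then show ?thesis
      by blast
  qed
  moreover have "T ` S \<subseteq> S"
    using T_on_I read_bajraktarevic_ends x_first_less_last by (auto simp: S_iff)
  moreover have "dist (T H1) (T H2) \<le> s * dist H1 H2" if H12: "H1 \<in> S" "H2 \<in> S" for H1 H2
  proof (rule dist_bound)
    fix z
    have ends: "H1 (x 1) = f (x 1)" "H1 (x N) = f (x N)" "H2 (x 1) = f (x 1)" "H2 (x N) = f (x N)"
      using H12 by (simp_all add: S_iff)
    obtain y where "\<bar>read_bajraktarevic H1 (clamp (x 1) (x N) z) - read_bajraktarevic H2 (clamp (x 1) (x N) z)\<bar>
        \<le> s * \<bar>H1 y - H2 y\<bar>"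
      using read_bajraktarevic_diff[OF ends clamp_in_I[OF H12(1)]] by blast
    also have "\<dots> \<le> s * dist H1 H2"
      using dist_bounded[of H1 y H2] s_nonneg by (intro mult_left_mono) (simp_all add: dist_real_def)
    finally show "dist (T H1 z) (T H2 z) \<le> s * dist H1 H2"
      using H12 by (simp add: T_apply dist_real_def)
  qed
  ultimately obtain H where H: "H \<in> S" "T H = H"
    using Banach_fix[OF _ _ s_nonneg s_less_1] by blast
  have "fractal_solution (apply_bcontfun H)"
    unfolding fractal_solution_def
  proof (intro conjI ballI continuous_on_apply_bcontfun)
    fix i y
    assume iy: "i \<in> {1..N-1}" "y \<in> I"
    have "H (a i * y + b i) = T H (a i * y + b i)"
      using H(2) by simp
    also have "\<dots> = f (a i * y + b i) + \<alpha> i y * (H y - F y)"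
      using T_on_I[OF H(1) affine_in_I[OF iy]] read_bajraktarevic_affine[OF _ _ iy] H(1)
      by (simp add: S_iff)
    finally show "H (a i * y + b i) = f (a i * y + b i) + \<alpha> i y * (H y - F y)" .
  qed
  then show ?thesis
    by blast
qed

lemma fractal_solution_ex1: "\<exists>!G. fractal_solution G \<and> (\<forall>y. y \<notin> I \<longrightarrow> G y = 0)"
proof (rule ex_ex1I)
  obtain G where G: "fractal_solution G"
    using fractal_solution_exists by blast
  have "fractal_solution (\<lambda>z. if z \<in> I then G z else 0)"
    using G affine_in_I unfolding fractal_solution_def
    by (auto cong: continuous_on_cong_simp)
  then show "\<exists>G. fractal_solution G \<and> (\<forall>y. y \<notin> I \<longrightarrow> G y = 0)"
    by (intro exI[of _ "\<lambda>z. if z \<in> I then G z else 0"]) auto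
next
  fix G1 G2
  assume "fractal_solution G1 \<and> (\<forall>y. y \<notin> I \<longrightarrow> G1 y = 0)"
    and "fractal_solution G2 \<and> (\<forall>y. y \<notin> I \<longrightarrow> G2 y = 0)"
  then show "G1 = G2"
    using fractal_solution_unique by (metis ext)
qed

end

section \<open>The quantum MKZ-fractal functions\<close>

lemma (in affine_partition) scaling_bound_imp_gap:
  fixes f g F :: "real \<Rightarrow> real"
  assumes f: "continuous_on I f" and g: "continuous_on I g" and F: "continuous_on I F"
    and fg: "\<And>y. y \<in> I \<Longrightarrow> g y \<le> f y"
    and i: "i \<in> {1..N-1}" and y: "y \<in> I"
    and c: "0 \<le> c" "c \<le> (INF t\<in>I. f (a i * t + b i) - g (a i * t + b i)) /
                             ((SUP t\<in>I. F t) - (INF t\<in>I. g t))"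
  shows "c * (F y - g y) \<le> f (a i * y + b i) - g (a i * y + b i)"
proof -
  define gap where "gap = (INF t\<in>I. f (a i * t + b i) - g (a i * t + b i))"
  define F_max where "F_max = (SUP t\<in>I. F t)"
  define g_min where "g_min = (INF t\<in>I. g t)"
  have gap_cont: "continuous_on I (\<lambda>t. f (a i * t + b i) - g (a i * t + b i))"
    using affine_in_I[OF i]
    by (intro continuous_intros continuous_on_compose2[OF f] continuous_on_compose2[OF g]) auto
  have gap_le: "gap \<le> f (a i * y + b i) - g (a i * y + b i)"
    unfolding gap_def using y
    by (intro cINF_lower bounded_imp_bdd_below compact_imp_bounded
        compact_continuous_image[OF gap_cont compact_Icc])
  have gap_nonneg: "0 \<le> gap"
    unfolding gap_def using I_nonempty fg affine_in_I[OF i] by (intro cINF_greatest) auto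
  have "F y \<le> F_max"
    unfolding F_max_def using y
    by (intro cSUP_upper bounded_imp_bdd_above compact_imp_bounded compact_continuous_image[OF F compact_Icc])
  moreover have "g_min \<le> g y"
    unfolding g_min_def using y
    by (intro cINF_lower bounded_imp_bdd_below compact_imp_bounded compact_continuous_image[OF g compact_Icc])
  ultimately have "c * (F y - g y) \<le> c * (F_max - g_min)"
    using c(1) by (intro mult_left_mono) auto
  also have "\<dots> \<le> gap"
  proof (cases "0 < F_max - g_min")
    case True
    then show ?thesis
      using c(2) by (simp add: gap_def F_max_def g_min_def pos_le_divide_eq)
  next
    case False
    then show ?thesis
      using c(1) gap_nonneg by (simp add: mult_nonneg_nonpos order.trans[of _ 0])
  qed
  finally show ?thesis
    using gap_le by linarith
qed

lemma abs_le_Max_Sup: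
  fixes \<alpha> :: "'i \<Rightarrow> 'a::topological_space \<Rightarrow> real"
  assumes "finite A" "i \<in> A" "compact S" "y \<in> S" "\<And>i. i \<in> A \<Longrightarrow> continuous_on S (\<alpha> i)"
  shows "\<bar>\<alpha> i y\<bar> \<le> (MAX i\<in>A. SUP y\<in>S. \<bar>\<alpha> i y\<bar>)"
proof -
  have "\<bar>\<alpha> i y\<bar> \<le> (SUP y\<in>S. \<bar>\<alpha> i y\<bar>)"
    using assms by (intro cSUP_upper bounded_imp_bdd_above compact_imp_bounded
        compact_continuous_image continuous_intros) auto
  also have "\<dots> \<le> (MAX i\<in>A. SUP y\<in>S. \<bar>\<alpha> i y\<bar>)"
    using assms(1,2) by (intro Max_ge) auto
  finally show ?thesis .
qed

lemma mkz_fractal_solution: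
  assumes "fractal_equation x N a b f (mkz (x 1) (x N) n q f) \<alpha> s"
  shows "fractal_equation.fractal_solution x N a b f (mkz (x 1) (x N) n q f) \<alpha>
           (mkz_fractal (x 1) (x N) N (\<lambda>i t. a i * t + b i) \<alpha> n q f)"
proof -
  interpret fractal_equation x N a b f "mkz (x 1) (x N) n q f" \<alpha> s
    by (fact assms)
  have "mkz_fractal (x 1) (x N) N (\<lambda>i t. a i * t + b i) \<alpha> n q f =
      (THE G. fractal_solution G \<and> (\<forall>y. y \<notin> I \<longrightarrow> G y = 0))"
    unfolding mkz_fractal_def fractal_solution_def by (intro arg_cong[where f = The] ext) blast
  then show ?thesis
    using theI'[OF fractal_solution_ex1] by simp
qed

lemma fractal_solution_uniform_limit:
  assumes eq: "\<And>n. fractal_equation x N a b f (F n) \<alpha> s"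
    and sol: "\<And>n. fractal_equation.fractal_solution x N a b f (F n) \<alpha> (G n)"
    and lim: "uniform_limit {x 1..x N} F f sequentially"
  shows "uniform_limit {x 1..x N} G f sequentially"
  unfolding uniform_limit_iff
proof (intro allI impI)
  fix e :: real
  assume e: "0 < e"
  have s: "0 \<le> s" "s < 1"
    using fractal_equation.s_nonneg[OF eq] fractal_equation.s_less_1[OF eq] by auto
  define E where "E = e * (1 - s) / 2"
  have "s * E / (1 - s) = s * e / 2"
    using s by (simp add: E_def field_simps)
  moreover have "s * e \<le> e"
    using e s by (intro mult_left_le_one_le) auto
  ultimately have E: "0 < E" "s * E / (1 - s) < e"
    using e s by (simp add: E_def, linarith)
  from uniform_limitD[OF lim E(1)]
  show "\<forall>\<^sub>F n in sequentially. \<forall>y\<in>{x 1..x N}. dist (G n y) (f y) < e"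
  proof eventually_elim
    case (elim n)
    have "\<bar>G n y - f y\<bar> \<le> s * E / (1 - s)" if "y \<in> {x 1..x N}" for y
      using elim that by (intro fractal_equation.fractal_solution_near_f[OF eq sol])
        (auto simp: dist_real_def abs_minus_commute less_imp_le)
    then show ?case
      using E(2) by (fastforce simp: dist_real_def)
  qed
qed

theorem theorem4p3:
  fixes x :: "nat \<Rightarrow> real" and N :: nat
    and a b :: "nat \<Rightarrow> real" and f g :: "real \<Rightarrow> real"
    and q :: "nat \<Rightarrow> real" and \<alpha> :: "nat \<Rightarrow> real \<Rightarrow> real"
  assumes N: "N \<ge> 2"
    and part: "\<And>i. i \<in> {1..<N} \<Longrightarrow> x i < x (i + 1)"
    and u1: "\<And>i. i \<in> {1..N-1} \<Longrightarrow> a i * x 1 + b i = x i"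
    and uN: "\<And>i. i \<in> {1..N-1} \<Longrightarrow> a i * x N + b i = x (i + 1)"
    and fc: "continuous_on {x 1..x N} f"
    and gc: "continuous_on {x 1..x N} g"
    and fg: "\<And>y. y \<in> {x 1..x N} \<Longrightarrow> g y \<le> f y"
    and q01: "\<And>n. 0 < q n \<and> q n \<le> 1"
    and qlim: "q \<longlonglongrightarrow> 1"
    and \<alpha>c: "\<And>i. i \<in> {1..N-1} \<Longrightarrow> continuous_on {x 1..x N} (\<alpha> i)"
    and \<alpha>norm: "(MAX i\<in>{1..N-1}. SUP y\<in>{x 1..x N}. \<bar>\<alpha> i y\<bar>) < 1"
    and \<alpha>bound: "\<And>n i y. n \<ge> 1 \<Longrightarrow> i \<in> {1..N-1} \<Longrightarrow> y \<in> {x 1..x N} \<Longrightarrow>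
        0 \<le> \<alpha> i y \<and>
        \<alpha> i y \<le> min ((INF t\<in>{x 1..x N}. f (a i * t + b i) - g (a i * t + b i)) /
                       ((SUP t\<in>{x 1..x N}. mkz (x 1) (x N) n (q n) f t) -
                        (INF t\<in>{x 1..x N}. g t))) 1"
  shows "(\<forall>n\<ge>1. \<forall>y\<in>{x 1..x N}.
            mkz_fractal (x 1) (x N) N (\<lambda>i t. a i * t + b i) \<alpha> n (q n) f y \<ge> g y)
       \<and> uniform_limit {x 1..x N}
            (\<lambda>n. mkz_fractal (x 1) (x N) N (\<lambda>i t. a i * t + b i) \<alpha> n (q n) f) f sequentially"
proof -
  interpret affine_partition x N a b
    using N part u1 uN by unfold_locales
  define s where "s = (MAX i\<in>{1..N-1}. SUP y\<in>I. \<bar>\<alpha> i y\<bar>)"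
  have q: "0 \<le> q n" "q n \<le> 1" for n
    using q01[of n] by auto
  have eq: "fractal_equation x N a b f (mkz (x 1) (x N) n (q n) f) \<alpha> s" for n
  proof
    let ?F = "mkz (x 1) (x N) n (q n) f"
    show "continuous_on I ?F" "?F (x 1) = f (x 1)" "?F (x N) = f (x N)"
      using continuous_on_mkz[OF x_first_less_last fc q]
        mkz_at_left_end[OF x_first_less_last fc q(1)] by (simp_all add: mkz_def)
    show "\<bar>\<alpha> i y\<bar> \<le> s" if "i \<in> {1..N-1}" "y \<in> I" for i y
      unfolding s_def using that \<alpha>c by (intro abs_le_Max_Sup) auto
  qed (use fc \<alpha>c \<alpha>norm s_def in auto)
  note sol = mkz_fractal_solution[OF eq]
  show ?thesis
  proof (intro conjI allI impI ballI)
    fix n :: nat and y :: real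
    assume n: "1 \<le> n" and y: "y \<in> I"
    show "g y \<le> mkz_fractal (x 1) (x N) N (\<lambda>i t. a i * t + b i) \<alpha> n (q n) f y"
    proof (rule fractal_equation.fractal_solution_ge[OF eq sol gc _ _ y])
      fix i t
      assume it: "i \<in> {1..N-1}" "t \<in> I"
      show "0 \<le> \<alpha> i t"
        using \<alpha>bound[OF n it] by simp
      show "\<alpha> i t * (mkz (x 1) (x N) n (q n) f t - g t) \<le> f (a i * t + b i) - g (a i * t + b i)"
        using \<alpha>bound[OF n it] continuous_on_mkz[OF x_first_less_last fc q]
        by (intro scaling_bound_imp_gap[OF fc gc _ fg it]) auto
    qed
  next
    show "uniform_limit I (\<lambda>n. mkz_fractal (x 1) (x N) N (\<lambda>i t. a i * t + b i) \<alpha> n (q n) f) f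
      sequentially"
      using mkz_uniform_limit[OF x_first_less_last fc _ qlim] q
      by (intro fractal_solution_uniform_limit[OF eq sol]) auto
  qed
qed

end
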